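(* Every flexible C-loop is diassociative. In particular, every commutative C-loop is diassociative.
   Context: A C-loop is a loop satisfying $x(y(yz))=((xy)y)z$ for all $x,y,z$. A loop is flexible if $(xy)x=x(yx)$ for all $x,y$. A loop is diassociative if every subloop generated by two elements is a group. *)

theory Defs
  imports Main
begin

definition loop :: "('a \<Rightarrow> 'a \<Rightarrow> 'a) \<Rightarrow> 'a \<Rightarrow> bool" where
  "loop m e \<longleftrightarrow> (\<forall>x. m e x = x \<and> m x e = x)
     \<and> (\<forall>a b. \<exists>!x. m a x = b) \<and> (\<forall>a b. \<exists>!y. m y a = b)"

definition ldiv :: "('a \<Rightarrow> 'a \<Rightarrow> 'a) \<Rightarrow> 'a \<Rightarrow> 'a \<Rightarrow> 'a" where
  "ldiv m a b = (THE x. m a x = b)"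

definition rdiv :: "('a \<Rightarrow> 'a \<Rightarrow> 'a) \<Rightarrow> 'a \<Rightarrow> 'a \<Rightarrow> 'a" where
  "rdiv m b a = (THE y. m y a = b)"

definition C_loop :: "('a \<Rightarrow> 'a \<Rightarrow> 'a) \<Rightarrow> 'a \<Rightarrow> bool" where
  "C_loop m e \<longleftrightarrow> loop m e \<and> (\<forall>x y z. m x (m y (m y z)) = m (m (m x y) y) z)"

definition flexible :: "('a \<Rightarrow> 'a \<Rightarrow> 'a) \<Rightarrow> bool" where
  "flexible m \<longleftrightarrow> (\<forall>x y. m (m x y) x = m x (m y x))"

definition commutative :: "('a \<Rightarrow> 'a \<Rightarrow> 'a) \<Rightarrow> bool" where
  "commutative m \<longleftrightarrow> (\<forall>x y. m x y = m y x)"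

inductive_set subloop_gen :: "('a \<Rightarrow> 'a \<Rightarrow> 'a) \<Rightarrow> 'a \<Rightarrow> 'a \<Rightarrow> 'a \<Rightarrow> 'a set"
  for m e a b where
  gen_e: "e \<in> subloop_gen m e a b"
| gen_a: "a \<in> subloop_gen m e a b"
| gen_b: "b \<in> subloop_gen m e a b"
| gen_mult: "x \<in> subloop_gen m e a b \<Longrightarrow> y \<in> subloop_gen m e a b \<Longrightarrow> m x y \<in> subloop_gen m e a b"
| gen_ldiv: "x \<in> subloop_gen m e a b \<Longrightarrow> y \<in> subloop_gen m e a b \<Longrightarrow> ldiv m x y \<in> subloop_gen m e a b"
| gen_rdiv: "x \<in> subloop_gen m e a b \<Longrightarrow> y \<in> subloop_gen m e a b \<Longrightarrow> rdiv m x y \<in> subloop_gen m e a b"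

definition is_group_on :: "('a \<Rightarrow> 'a \<Rightarrow> 'a) \<Rightarrow> 'a \<Rightarrow> 'a set \<Rightarrow> bool" where
  "is_group_on m e S \<longleftrightarrow> e \<in> S \<and> (\<forall>x\<in>S. \<forall>y\<in>S. m x y \<in> S)
     \<and> (\<forall>x\<in>S. m e x = x \<and> m x e = x)
     \<and> (\<forall>x\<in>S. \<forall>y\<in>S. \<forall>z\<in>S. m (m x y) z = m x (m y z))
     \<and> (\<forall>x\<in>S. \<exists>y\<in>S. m x y = e \<and> m y x = e)"

definition diassociative :: "('a \<Rightarrow> 'a \<Rightarrow> 'a) \<Rightarrow> 'a \<Rightarrow> bool" where
  "diassociative m e \<longleftrightarrow> (\<forall>a b. is_group_on m e (subloop_gen m e a b))"

end

theory Submission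
  imports Defs
begin

text \<open>In a C-loop the squares are nuclear; hence the nucleus N is a normal subloop and
  L/N is an elementary abelian 2-group. The subloop generated by a and b therefore lies in
  the union of the cosets of N by e, a, b and ab. Whether a triple associates is unaffected
  by multiplying its entries by nuclear elements, so it suffices to check triples p, q, r
  of these four representatives. Such a triple contains e, or repeats an entry (the two
  alternative laws and flexibility), or is a permutation of a, b, ab; in the last case r
  is congruent to pq modulo N, and (pq)(pq) = p(q(pq)) holds in every C-loop.\<close>

locale cloop =
  fixes m :: "'a \<Rightarrow> 'a \<Rightarrow> 'a" (infixl \<open>\<cdot>\<close> 70) and e :: 'a
  assumes C_loop: "C_loop m e"
begin

lemma left_unit [simp]: "e \<cdot> x = x" and right_unit [simp]: "x \<cdot> e = x"
  using C_loop by (auto simp: C_loop_def loop_def)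

lemma ex1_left_solution: "\<exists>!x. a \<cdot> x = b" and ex1_right_solution: "\<exists>!y. y \<cdot> a = b"
  using C_loop by (auto simp: C_loop_def loop_def)

lemma ldiv_eqI: "a \<cdot> x = b \<Longrightarrow> ldiv m a b = x"
  unfolding ldiv_def by (rule the1_equality[OF ex1_left_solution])

lemma rdiv_eqI: "y \<cdot> a = b \<Longrightarrow> rdiv m b a = y"
  unfolding rdiv_def by (rule the1_equality[OF ex1_right_solution])

lemma left_cancel: "a \<cdot> x = a \<cdot> y \<Longrightarrow> x = y"
  by (metis ldiv_eqI)

lemma right_cancel: "x \<cdot> a = y \<cdot> a \<Longrightarrow> x = y"
  by (metis rdiv_eqI)

lemma C_law: "x \<cdot> (y \<cdot> (y \<cdot> z)) = ((x \<cdot> y) \<cdot> y) \<cdot> z"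
  using C_loop by (simp add: C_loop_def)

lemma left_alternative: "y \<cdot> (y \<cdot> z) = (y \<cdot> y) \<cdot> z"
  using C_law[of e y z] by simp

lemma right_alternative: "(x \<cdot> y) \<cdot> y = x \<cdot> (y \<cdot> y)"
  using C_law[of x y e] by simp

definition inv :: "'a \<Rightarrow> 'a" where
  "inv x = ldiv m x e"

lemma right_inverse [simp]: "x \<cdot> inv x = e"
  unfolding inv_def ldiv_def by (rule theI', rule ex1_left_solution)

lemma right_inverse_property [simp]: "(w \<cdot> x) \<cdot> inv x = w"
proof -
  obtain y where "y \<cdot> x = w" using ex1_right_solution by blast
  with C_law[of y x "inv x"] show ?thesis by simp
qed

lemma left_inverse [simp]: "inv x \<cdot> x = e"
proof -
  have "(inv x \<cdot> x) \<cdot> inv x = e \<cdot> inv x" by simp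
  then show ?thesis by (rule right_cancel)
qed

lemma left_inverse_property [simp]: "inv x \<cdot> (x \<cdot> v) = v"
proof -
  obtain z where "x \<cdot> z = v" using ex1_left_solution by blast
  with C_law[of "inv x" x z] show ?thesis by simp
qed

lemma inv_inv [simp]: "inv (inv x) = x"
  using left_cancel[of "inv x" "inv (inv x)" x] by simp

lemma left_inverse_property' [simp]: "x \<cdot> (inv x \<cdot> v) = v"
  using left_inverse_property[of "inv x"] by simp

lemma right_inverse_property' [simp]: "(w \<cdot> inv x) \<cdot> x = w"
  using right_inverse_property[of w "inv x"] by simp

lemma ldiv_eq: "ldiv m x y = inv x \<cdot> y"
  by (rule ldiv_eqI) simp

lemma rdiv_eq: "rdiv m y x = y \<cdot> inv x"
  by (rule rdiv_eqI) simp

lemma inv_mult: "inv (x \<cdot> y) = inv y \<cdot> inv x"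
proof -
  have "inv (x \<cdot> y) \<cdot> x = inv (x \<cdot> y) \<cdot> ((x \<cdot> y) \<cdot> inv y)" by simp
  also have "\<dots> = inv y" by (rule left_inverse_property)
  finally have "(inv (x \<cdot> y) \<cdot> x) \<cdot> inv x = inv y \<cdot> inv x" by simp
  then show ?thesis by simp
qed

lemma inv_eq_square_mult: "inv x = (inv x \<cdot> inv x) \<cdot> x"
  using left_alternative[of "inv x" x] by simp

lemma inv_eq_mult_square: "inv x = x \<cdot> (inv x \<cdot> inv x)"
  using right_alternative[of x "inv x"] by simp

definition nuclear :: "'a \<Rightarrow> bool" where
  "nuclear n \<longleftrightarrow> (\<forall>x y. (n \<cdot> x) \<cdot> y = n \<cdot> (x \<cdot> y) \<and> (x \<cdot> n) \<cdot> y = x \<cdot> (n \<cdot> y)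
      \<and> (x \<cdot> y) \<cdot> n = x \<cdot> (y \<cdot> n))"

lemma nuclearD:
  assumes "nuclear n"
  shows "(n \<cdot> x) \<cdot> y = n \<cdot> (x \<cdot> y)" "(x \<cdot> n) \<cdot> y = x \<cdot> (n \<cdot> y)" "(x \<cdot> y) \<cdot> n = x \<cdot> (y \<cdot> n)"
  using assms by (auto simp: nuclear_def)

lemma nuclear_unit: "nuclear e"
  by (simp add: nuclear_def)

lemma nuclearI_middle:
  assumes mid: "\<And>x y. (x \<cdot> s) \<cdot> y = x \<cdot> (s \<cdot> y)"
    and mid_inv: "\<And>x y. (x \<cdot> inv s) \<cdot> y = x \<cdot> (inv s \<cdot> y)"
  shows "nuclear s"
  unfolding nuclear_def
proof (intro allI conjI)
  fix x y
  show "(x \<cdot> s) \<cdot> y = x \<cdot> (s \<cdot> y)" by (rule mid)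
  have "inv x \<cdot> (inv s \<cdot> ((s \<cdot> x) \<cdot> y)) = inv (s \<cdot> x) \<cdot> ((s \<cdot> x) \<cdot> y)"
    by (simp add: inv_mult flip: mid_inv)
  then have "x \<cdot> y = inv s \<cdot> ((s \<cdot> x) \<cdot> y)"
    by (metis left_inverse_property left_inverse_property')
  then show "(s \<cdot> x) \<cdot> y = s \<cdot> (x \<cdot> y)" by simp
  have "(((x \<cdot> y) \<cdot> s) \<cdot> inv s) \<cdot> inv y = ((x \<cdot> y) \<cdot> s) \<cdot> inv (y \<cdot> s)"
    by (simp only: inv_mult mid_inv)
  then have "x \<cdot> (y \<cdot> s) = (x \<cdot> y) \<cdot> s"
    by (metis right_inverse_property right_inverse_property')
  then show "(x \<cdot> y) \<cdot> s = x \<cdot> (y \<cdot> s)" by simp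
qed

lemma nuclear_square: "nuclear (y \<cdot> y)"
proof -
  have mid: "(u \<cdot> (z \<cdot> z)) \<cdot> v = u \<cdot> ((z \<cdot> z) \<cdot> v)" for u z v
    using C_law[of u z v] by (simp add: left_alternative right_alternative)
  show ?thesis
    by (rule nuclearI_middle) (simp_all add: mid inv_mult)
qed

lemma nuclear_mult:
  assumes n1: "nuclear n1" and n2: "nuclear n2"
  shows "nuclear (n1 \<cdot> n2)"
  unfolding nuclear_def
proof (intro allI conjI)
  fix x y
  show "((n1 \<cdot> n2) \<cdot> x) \<cdot> y = (n1 \<cdot> n2) \<cdot> (x \<cdot> y)"
    by (simp add: nuclearD(1)[OF n1] nuclearD(1)[OF n2])
  have "(x \<cdot> (n1 \<cdot> n2)) \<cdot> y = ((x \<cdot> n1) \<cdot> n2) \<cdot> y"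
    by (simp only: nuclearD(2)[OF n1])
  also have "\<dots> = (x \<cdot> n1) \<cdot> (n2 \<cdot> y)"
    by (rule nuclearD(2)[OF n2])
  also have "\<dots> = x \<cdot> (n1 \<cdot> (n2 \<cdot> y))"
    by (rule nuclearD(2)[OF n1])
  also have "\<dots> = x \<cdot> ((n1 \<cdot> n2) \<cdot> y)"
    by (simp only: nuclearD(1)[OF n1])
  finally show "(x \<cdot> (n1 \<cdot> n2)) \<cdot> y = x \<cdot> ((n1 \<cdot> n2) \<cdot> y)" .
  have "(x \<cdot> y) \<cdot> (n1 \<cdot> n2) = ((x \<cdot> y) \<cdot> n1) \<cdot> n2"
    by (simp only: nuclearD(2)[OF n1])
  also have "\<dots> = (x \<cdot> (y \<cdot> n1)) \<cdot> n2"
    by (simp only: nuclearD(3)[OF n1])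
  also have "\<dots> = x \<cdot> ((y \<cdot> n1) \<cdot> n2)"
    by (rule nuclearD(3)[OF n2])
  also have "\<dots> = x \<cdot> (y \<cdot> (n1 \<cdot> n2))"
    by (simp only: nuclearD(2)[OF n1])
  finally show "(x \<cdot> y) \<cdot> (n1 \<cdot> n2) = x \<cdot> (y \<cdot> (n1 \<cdot> n2))" .
qed

lemma nuclear_inv:
  assumes n: "nuclear n"
  shows "nuclear (inv n)"
  unfolding nuclear_def
proof (intro allI conjI)
  fix x y
  have "n \<cdot> ((inv n \<cdot> x) \<cdot> y) = n \<cdot> (inv n \<cdot> (x \<cdot> y))"
    by (simp add: nuclearD(1)[OF n, symmetric])
  then show "(inv n \<cdot> x) \<cdot> y = inv n \<cdot> (x \<cdot> y)" by (rule left_cancel)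
  show "(x \<cdot> inv n) \<cdot> y = x \<cdot> (inv n \<cdot> y)"
    using nuclearD(2)[OF n, of "x \<cdot> inv n" "inv n \<cdot> y"] by simp
  have "(x \<cdot> (y \<cdot> inv n)) \<cdot> n = ((x \<cdot> y) \<cdot> inv n) \<cdot> n"
    by (simp add: nuclearD(3)[OF n])
  from right_cancel[OF this] show "(x \<cdot> y) \<cdot> inv n = x \<cdot> (y \<cdot> inv n)" by (rule sym)
qed

lemma nucleus_normal:
  assumes n: "nuclear n"
  obtains n' where "nuclear n'" "x \<cdot> n = n' \<cdot> x"
proof -
  \<comment> \<open>x n x\<inverse> = w t with w = (x n) x and t = x\<inverse> x\<inverse>; w is nuclear as w n = (x n)(x n).\<close>
  define w where "w = (x \<cdot> n) \<cdot> x"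
  have "w \<cdot> n = (x \<cdot> n) \<cdot> (x \<cdot> n)"
    unfolding w_def by (simp add: nuclearD(3)[OF n])
  then have "nuclear (w \<cdot> n)" by (simp add: nuclear_square)
  from nuclear_mult[OF this nuclear_inv[OF n]] have w: "nuclear w" by simp
  define t where "t = inv x \<cdot> inv x"
  have t: "nuclear t"
    unfolding t_def by (rule nuclear_square)
  have "(x \<cdot> n) \<cdot> inv x = (x \<cdot> n) \<cdot> (x \<cdot> t)"
    unfolding t_def using inv_eq_mult_square by simp
  also have "\<dots> = w \<cdot> t"
    unfolding w_def by (simp add: nuclearD(3)[OF t])
  finally have "nuclear ((x \<cdot> n) \<cdot> inv x)"
    using nuclear_mult[OF w t] by simp
  moreover have "x \<cdot> n = ((x \<cdot> n) \<cdot> inv x) \<cdot> x" by simp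
  ultimately show ?thesis by (rule that)
qed

definition cong_nucleus :: "'a \<Rightarrow> 'a \<Rightarrow> bool" (infix \<open>\<equiv>\<^sub>N\<close> 50) where
  "x \<equiv>\<^sub>N y \<longleftrightarrow> (\<exists>n. nuclear n \<and> x = n \<cdot> y)"

lemma cong_nucleusI: "nuclear n \<Longrightarrow> n \<cdot> y \<equiv>\<^sub>N y"
  unfolding cong_nucleus_def by blast

lemma cong_nucleusE:
  assumes "x \<equiv>\<^sub>N y"
  obtains n where "nuclear n" "x = n \<cdot> y"
  using assms unfolding cong_nucleus_def by blast

lemma cong_refl [simp]: "x \<equiv>\<^sub>N x"
  using cong_nucleusI[OF nuclear_unit] by simp

lemma cong_sym: "x \<equiv>\<^sub>N y \<Longrightarrow> y \<equiv>\<^sub>N x"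
  by (elim cong_nucleusE) (metis cong_nucleusI nuclear_inv left_inverse_property)

lemma cong_trans: "x \<equiv>\<^sub>N y \<Longrightarrow> y \<equiv>\<^sub>N z \<Longrightarrow> x \<equiv>\<^sub>N z"
  by (elim cong_nucleusE) (metis cong_nucleusI nuclear_mult nuclearD(1))

lemma cong_mult_right: "x \<equiv>\<^sub>N x' \<Longrightarrow> x \<cdot> y \<equiv>\<^sub>N x' \<cdot> y"
  by (elim cong_nucleusE) (simp add: cong_nucleusI nuclearD(1))

lemma cong_mult_left:
  assumes "y \<equiv>\<^sub>N y'"
  shows "x \<cdot> y \<equiv>\<^sub>N x \<cdot> y'"
proof -
  obtain n where n: "nuclear n" "y = n \<cdot> y'"
    using assms by (rule cong_nucleusE)
  obtain n' where n': "nuclear n'" "x \<cdot> n = n' \<cdot> x"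
    using n(1) by (rule nucleus_normal)
  have "x \<cdot> y = (x \<cdot> n) \<cdot> y'"
    by (simp add: n(2) nuclearD(2)[OF n(1)])
  also have "\<dots> = n' \<cdot> (x \<cdot> y')"
    by (simp add: n'(2) nuclearD(1)[OF n'(1)])
  finally show ?thesis
    using n'(1) by (simp add: cong_nucleusI)
qed

lemma cong_mult: "x \<equiv>\<^sub>N x' \<Longrightarrow> y \<equiv>\<^sub>N y' \<Longrightarrow> x \<cdot> y \<equiv>\<^sub>N x' \<cdot> y'"
  by (meson cong_mult_left cong_mult_right cong_trans)

lemma cong_square: "x \<cdot> x \<equiv>\<^sub>N e"
  using cong_nucleusI[OF nuclear_square, of x e] by simp

lemma cong_inv: "inv x \<equiv>\<^sub>N x"
  using cong_nucleusI[OF nuclear_square, of "inv x" x] inv_eq_square_mult by simp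

lemma cong_commute: "x \<cdot> y \<equiv>\<^sub>N y \<cdot> x"
proof -
  have "inv (x \<cdot> y) \<equiv>\<^sub>N y \<cdot> x"
    unfolding inv_mult by (rule cong_mult[OF cong_inv cong_inv])
  then show ?thesis using cong_inv cong_sym cong_trans by blast
qed

lemma cong_absorb_left: "x \<cdot> (x \<cdot> y) \<equiv>\<^sub>N y"
  using cong_mult_right[OF cong_square, of x y] by (simp add: left_alternative)

lemma cong_absorb_right: "(y \<cdot> x) \<cdot> x \<equiv>\<^sub>N y"
  using cong_mult_left[OF cong_square, of y x] by (simp add: right_alternative)

lemma cong_absorb_outer_left: "(x \<cdot> y) \<cdot> x \<equiv>\<^sub>N y"
  by (rule cong_trans[OF cong_mult_right[OF cong_commute] cong_absorb_right])

lemma cong_absorb_outer_right: "y \<cdot> (x \<cdot> y) \<equiv>\<^sub>N x"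
  by (rule cong_trans[OF cong_mult_left[OF cong_commute] cong_absorb_left])

definition associates :: "'a \<Rightarrow> 'a \<Rightarrow> 'a \<Rightarrow> bool" where
  "associates p q r \<longleftrightarrow> (p \<cdot> q) \<cdot> r = p \<cdot> (q \<cdot> r)"

lemma associates_nuclear_left:
  assumes "associates p q r" "nuclear n"
  shows "associates (n \<cdot> p) q r"
  using assms unfolding associates_def by (simp add: nuclearD(1))

lemma associates_nuclear_middle:
  assumes pqr: "associates p q r" and n: "nuclear n"
  shows "associates p (n \<cdot> q) r"
proof -
  obtain n' where n': "nuclear n'" "p \<cdot> n = n' \<cdot> p"
    using n by (rule nucleus_normal)
  have "(p \<cdot> (n \<cdot> q)) \<cdot> r = ((n' \<cdot> p) \<cdot> q) \<cdot> r"
    by (simp add: nuclearD(2)[OF n] flip: n'(2))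
  also have "\<dots> = n' \<cdot> (p \<cdot> (q \<cdot> r))"
    using pqr by (simp add: nuclearD(1)[OF n'(1)] associates_def)
  also have "\<dots> = (p \<cdot> n) \<cdot> (q \<cdot> r)"
    by (simp add: n'(2) nuclearD(1)[OF n'(1)])
  also have "\<dots> = p \<cdot> ((n \<cdot> q) \<cdot> r)"
    by (simp add: nuclearD(1,2)[OF n])
  finally show ?thesis unfolding associates_def .
qed

lemma associates_nuclear_right:
  assumes pqr: "associates p q r" and n: "nuclear n"
  shows "associates p q (n \<cdot> r)"
proof -
  obtain n2 where n2: "nuclear n2" "q \<cdot> n = n2 \<cdot> q"
    using n by (rule nucleus_normal)
  obtain n3 where n3: "nuclear n3" "p \<cdot> n2 = n3 \<cdot> p"
    using n2(1) by (rule nucleus_normal)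
  have "(p \<cdot> q) \<cdot> n = p \<cdot> (n2 \<cdot> q)"
    by (simp add: nuclearD(3)[OF n] n2(2))
  also have "\<dots> = (n3 \<cdot> p) \<cdot> q"
    by (simp add: nuclearD(2)[OF n2(1)] flip: n3(2))
  also have "\<dots> = n3 \<cdot> (p \<cdot> q)"
    by (simp add: nuclearD(1)[OF n3(1)])
  finally have pqn: "(p \<cdot> q) \<cdot> n = n3 \<cdot> (p \<cdot> q)" .
  have "(p \<cdot> q) \<cdot> (n \<cdot> r) = n3 \<cdot> ((p \<cdot> q) \<cdot> r)"
    by (simp add: pqn nuclearD(1)[OF n3(1)] flip: nuclearD(2)[OF n])
  also have "\<dots> = (p \<cdot> n2) \<cdot> (q \<cdot> r)"
    using pqr by (simp add: n3(2) nuclearD(1)[OF n3(1)] associates_def)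
  also have "\<dots> = p \<cdot> ((n2 \<cdot> q) \<cdot> r)"
    by (simp only: nuclearD(1,2)[OF n2(1)])
  also have "\<dots> = p \<cdot> (q \<cdot> (n \<cdot> r))"
    by (simp only: nuclearD(2)[OF n] flip: n2(2))
  finally show ?thesis unfolding associates_def .
qed

lemma associates_cong:
  assumes "associates p q r" "x \<equiv>\<^sub>N p" "y \<equiv>\<^sub>N q" "z \<equiv>\<^sub>N r"
  shows "associates x y z"
  using assms(2-4)
  by (elim cong_nucleusE) (simp add: associates_nuclear_left associates_nuclear_middle
      associates_nuclear_right assms(1))

lemma associates_product: "associates x y (x \<cdot> y)"
  using right_alternative[of "inv x" "x \<cdot> y"] by (simp add: associates_def)

lemma associates_if_cong_product: "r \<equiv>\<^sub>N p \<cdot> q \<Longrightarrow> associates p q r"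
  by (rule associates_cong[OF associates_product cong_refl cong_refl])

lemma associates_unit_left: "associates e q r"
  and associates_unit_middle: "associates p e r"
  and associates_unit_right: "associates p q e"
  and associates_left_alternative: "associates p p r"
  and associates_right_alternative: "associates p q q"
  by (simp_all add: associates_def left_alternative right_alternative)

lemma associates_flexible: "flexible m \<Longrightarrow> associates p q p"
  by (simp add: associates_def flexible_def)

lemma four_reps_mult:
  assumes "p \<in> {e, a, b, a \<cdot> b}" "q \<in> {e, a, b, a \<cdot> b}"
  shows "\<exists>t \<in> {e, a, b, a \<cdot> b}. p \<cdot> q \<equiv>\<^sub>N t"
  using assms
  by (elim insertE emptyE)
    (simp_all add: cong_square cong_commute cong_absorb_left cong_absorb_right
      cong_absorb_outer_left cong_absorb_outer_right)

lemma four_reps_cases: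
  assumes "p \<in> {e, a, b, a \<cdot> b}" "q \<in> {e, a, b, a \<cdot> b}" "r \<in> {e, a, b, a \<cdot> b}"
  shows "p = e \<or> q = e \<or> r = e \<or> p = q \<or> q = r \<or> p = r \<or> r \<equiv>\<^sub>N p \<cdot> q"
  using assms
  by (elim insertE emptyE)
    (simp_all add: cong_sym[OF cong_commute] cong_sym[OF cong_absorb_left]
      cong_sym[OF cong_absorb_right] cong_sym[OF cong_absorb_outer_left]
      cong_sym[OF cong_absorb_outer_right])

lemma four_reps_associate:
  assumes "flexible m" "p \<in> {e, a, b, a \<cdot> b}" "q \<in> {e, a, b, a \<cdot> b}" "r \<in> {e, a, b, a \<cdot> b}"
  shows "associates p q r"
  using four_reps_cases[OF assms(2-4)]
  by (auto simp: associates_unit_left associates_unit_middle associates_unit_right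
      associates_left_alternative associates_right_alternative
      associates_flexible[OF assms(1)] associates_if_cong_product)

definition four_cosets :: "'a \<Rightarrow> 'a \<Rightarrow> 'a set" where
  "four_cosets a b = {x. \<exists>p \<in> {e, a, b, a \<cdot> b}. x \<equiv>\<^sub>N p}"

lemma four_cosets_mult:
  assumes "x \<in> four_cosets a b" "y \<in> four_cosets a b"
  shows "x \<cdot> y \<in> four_cosets a b"
proof -
  obtain p q where p: "p \<in> {e, a, b, a \<cdot> b}" "x \<equiv>\<^sub>N p"
    and q: "q \<in> {e, a, b, a \<cdot> b}" "y \<equiv>\<^sub>N q"
    using assms unfolding four_cosets_def by blast
  obtain t where "t \<in> {e, a, b, a \<cdot> b}" "p \<cdot> q \<equiv>\<^sub>N t"
    using four_reps_mult[OF p(1) q(1)] by blast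
  with cong_mult[OF p(2) q(2)] show ?thesis
    unfolding four_cosets_def by (blast intro: cong_trans)
qed

lemma four_cosets_inv: "x \<in> four_cosets a b \<Longrightarrow> inv x \<in> four_cosets a b"
  unfolding four_cosets_def by (blast intro: cong_trans[OF cong_inv])

lemma subloop_gen_subset_four_cosets: "subloop_gen m e a b \<subseteq> four_cosets a b"
proof
  fix x
  assume "x \<in> subloop_gen m e a b"
  then show "x \<in> four_cosets a b"
  proof (induction rule: subloop_gen.induct)
    case gen_e
    show ?case by (auto simp: four_cosets_def)
  next
    case gen_a
    show ?case by (auto simp: four_cosets_def)
  next
    case gen_b
    show ?case by (auto simp: four_cosets_def)
  next
    case (gen_mult x y)
    then show ?case by (intro four_cosets_mult)
  next
    case (gen_ldiv x y)
    then show ?case unfolding ldiv_eq by (intro four_cosets_mult four_cosets_inv)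
  next
    case (gen_rdiv x y)
    then show ?case unfolding rdiv_eq by (intro four_cosets_mult four_cosets_inv)
  qed
qed

lemma four_cosets_assoc:
  assumes "flexible m" "x \<in> four_cosets a b" "y \<in> four_cosets a b" "z \<in> four_cosets a b"
  shows "(x \<cdot> y) \<cdot> z = x \<cdot> (y \<cdot> z)"
proof -
  obtain p q r where "p \<in> {e, a, b, a \<cdot> b}" "x \<equiv>\<^sub>N p" "q \<in> {e, a, b, a \<cdot> b}" "y \<equiv>\<^sub>N q"
    "r \<in> {e, a, b, a \<cdot> b}" "z \<equiv>\<^sub>N r"
    using assms(2-4) unfolding four_cosets_def by blast
  with four_reps_associate[OF assms(1)] have "associates x y z"
    by (blast intro: associates_cong)
  then show ?thesis unfolding associates_def .
qed

lemma diassociative_if_flexible: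
  assumes "flexible m"
  shows "diassociative m e"
  unfolding diassociative_def is_group_on_def
proof (intro allI conjI ballI)
  fix a b
  let ?G = "subloop_gen m e a b"
  show "e \<in> ?G" by (rule gen_e)
  fix x assume x: "x \<in> ?G"
  show "e \<cdot> x = x" "x \<cdot> e = x" by simp_all
  show "\<exists>y\<in>?G. x \<cdot> y = e \<and> y \<cdot> x = e"
  proof
    show "ldiv m x e \<in> ?G" using x gen_e by (rule gen_ldiv)
    show "x \<cdot> ldiv m x e = e \<and> ldiv m x e \<cdot> x = e" by (simp add: ldiv_eq)
  qed
  fix y assume y: "y \<in> ?G"
  show "x \<cdot> y \<in> ?G" using x y by (rule gen_mult)
  fix z assume "z \<in> ?G"
  with x y show "(x \<cdot> y) \<cdot> z = x \<cdot> (y \<cdot> z)"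
    using four_cosets_assoc[OF assms] subloop_gen_subset_four_cosets by blast
qed

end

theorem lemma4p4:
  fixes m :: "'a \<Rightarrow> 'a \<Rightarrow> 'a" and e :: 'a
  assumes "C_loop m e"
  shows "(flexible m \<longrightarrow> diassociative m e) \<and> (commutative m \<longrightarrow> diassociative m e)"
proof -
  interpret cloop m e by (rule cloop.intro[OF assms])
  have "commutative m \<Longrightarrow> flexible m"
    unfolding commutative_def flexible_def by simp
  then show ?thesis using diassociative_if_flexible by blast
qed

end
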